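(* Let $n\in\mathbb N$, $\delta>0$, and let $d$ be a metric on $\mathbb R^n$ induced by a norm. Let $\{\mathcal D^n(\delta);\tilde w_1,\dots,\tilde w_N;p_1,\dots,p_N\}$ be a DIFS in which each $\tilde w_i$ is the $\delta$-roundoff of a contraction $w_i:\mathbb R^n\to\mathbb R^n$ on $(\mathbb R^n,d)$ with contractivity factor $\lambda_i\in[0,1)$ and fixed point $x_f^{(i)}$. Let $o\in\mathbb R^n$ be arbitrary, and put $r_{max}:=\max_i d(x_f^{(i)},o)$, $\lambda_{max}:=\max_i\lambda_i$, $\alpha:=\frac{1+\lambda_{max}}{1-\lambda_{max}}$ and $r:=\alpha r_{max}+\theta(1-\lambda_{max})^{-1}$. Then for every $\varepsilon>0$, the set $S=B(o,r+\varepsilon)\cap\mathcal D^n(\delta)$, where $B(o,\rho)$ is the open ball in $(\mathbb R^n,d)$ of center $o$ and radius $\rho$, satisfies $\tilde w_i(S)\subset S$ for every $i\in\{1,\dots,N\}$. Moreover, the set $\mathcal A$ of all recurrent states of the Markov chain associated with the DIFS is nonempty and $\mathcal A\subset S$.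
   Context: For $m=(m_1,\dots,m_n)\in\mathbb Z^n$ the $\delta$-cube is $C_\delta(m)=\prod_{j=1}^n[(m_j-\tfrac12)\delta,(m_j+\tfrac12)\delta)$; these cubes partition $\mathbb R^n$. The $\delta$-discretization is $\mathcal D^n(\delta)=\{\delta m:m\in\mathbb Z^n\}\subset\mathbb R^n$. The $\delta$-roundoff of $x\in\mathbb R^n$ is $\tilde x=\delta m$ where $x\in C_\delta(m)$; the $\delta$-roundoff of a map $w:\mathbb R^n\to\mathbb R^n$ is $\tilde w:\mathcal D^n(\delta)\to\mathcal D^n(\delta)$, $\tilde w(\tilde x)=\widetilde{w(\tilde x)}$. $\theta:=\tfrac12\operatorname{diam}_d(C_\delta(0))$. A DIFS (discrete IFS with place-dependent probabilities) $\{S;\tilde w_1,\dots,\tilde w_N;p_1,\dots,p_N\}$ consists of $S\subset\mathcal D^n(\delta)$, maps $\tilde w_i:S\to S$ and functions $p_i:S\to(0,1]$ with $\sum_i p_i(\tilde x)=1$ for all $\tilde x\in S$. Its associated Markov chain on $S$ has transition probabilities $P(\tilde x,\tilde y)=\sum_{i=1}^N p_i(\tilde x)\mathbf 1_{\{\tilde y\}}(\tilde w_i(\tilde x))$. A state $\tilde x$ is recurrent if the chain started at $\tilde x$ returns to $\tilde x$ in finitely many steps with probability $1$. *)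

theory Defs
  imports "HOL-Analysis.Analysis"
begin

text \<open>A norm on R^n (the metric d is d x y = nrm (x - y)).\<close>
definition is_norm :: "(real^'n \<Rightarrow> real) \<Rightarrow> bool" where
  "is_norm nrm \<longleftrightarrow> (\<forall>x. 0 \<le> nrm x) \<and> (\<forall>x. nrm x = 0 \<longleftrightarrow> x = 0)
     \<and> (\<forall>a x. nrm (a *\<^sub>R x) = \<bar>a\<bar> * nrm x) \<and> (\<forall>x y. nrm (x + y) \<le> nrm x + nrm y)"

definition grid_pt :: "real \<Rightarrow> int^'n \<Rightarrow> real^'n" where
  "grid_pt \<delta> m = (\<chi> j. \<delta> * of_int (m $ j))"

definition cube :: "real \<Rightarrow> int^'n \<Rightarrow> (real^'n) set" where
  "cube \<delta> m = {x. \<forall>j. (of_int (m $ j) - 1/2) * \<delta> \<le> x $ j \<and> x $ j < (of_int (m $ j) + 1/2) * \<delta>}"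

definition discretization :: "real \<Rightarrow> (real^'n) set" where
  "discretization \<delta> = range (grid_pt \<delta>)"

definition roundoff :: "real \<Rightarrow> real^'n \<Rightarrow> real^'n" where
  "roundoff \<delta> x = (THE y. \<exists>m. y = grid_pt \<delta> m \<and> x \<in> cube \<delta> m)"

definition diam_d :: "(real^'n \<Rightarrow> real) \<Rightarrow> (real^'n) set \<Rightarrow> real" where
  "diam_d nrm A = (SUP x\<in>A. SUP y\<in>A. nrm (x - y))"

definition theta :: "(real^'n \<Rightarrow> real) \<Rightarrow> real \<Rightarrow> real" where
  "theta nrm \<delta> = diam_d nrm (cube \<delta> 0) / 2"

definition is_DIFS :: "'a set \<Rightarrow> (nat \<Rightarrow> 'a \<Rightarrow> 'a) \<Rightarrow> (nat \<Rightarrow> 'a \<Rightarrow> real) \<Rightarrow> nat \<Rightarrow> bool" where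
  "is_DIFS S W p N \<longleftrightarrow> (\<forall>i\<in>{1..N}. \<forall>x\<in>S. W i x \<in> S)
     \<and> (\<forall>i\<in>{1..N}. \<forall>x\<in>S. 0 < p i x \<and> p i x \<le> 1)
     \<and> (\<forall>x\<in>S. (\<Sum>i=1..N. p i x) = 1)"

text \<open>hit_within N W p k y z: probability that the associated Markov chain started at z
  visits y at some time in 1..k (transition P(x,y) = sum_i p_i(x) [W_i x = y]).\<close>
fun hit_within :: "nat \<Rightarrow> (nat \<Rightarrow> 'a \<Rightarrow> 'a) \<Rightarrow> (nat \<Rightarrow> 'a \<Rightarrow> real) \<Rightarrow> nat \<Rightarrow> 'a \<Rightarrow> 'a \<Rightarrow> real" where
  "hit_within N W p 0 y z = 0"
| "hit_within N W p (Suc k) y z =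
     (\<Sum>i=1..N. p i z * (if W i z = y then 1 else hit_within N W p k y (W i z)))"

text \<open>x is recurrent: the probability of returning to x in finitely many steps
  (the increasing limit of the probability of returning within k steps) is 1.\<close>
definition recurrent :: "nat \<Rightarrow> (nat \<Rightarrow> 'a \<Rightarrow> 'a) \<Rightarrow> (nat \<Rightarrow> 'a \<Rightarrow> real) \<Rightarrow> 'a \<Rightarrow> bool" where
  "recurrent N W p x \<longleftrightarrow> (SUP k. hit_within N W p k x x) = 1"

end

theory Submission
  imports Defs
begin

text \<open>Rounding moves a point by at most \<open>\<theta>\<close>, so a rounded map \<open>W\<^sub>i\<close> with contraction factor
  \<open>\<lambda>\<^sub>i\<close> and fixed point \<open>x\<^sub>i\<close> satisfies
  \<open>d(W\<^sub>i z, o) \<le> \<theta> + \<lambda>\<^sub>i d(z, o) + (1 + \<lambda>\<^sub>i) d(x\<^sub>i, o)\<close>, and \<open>r\<close> is exactly the radius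
  beyond which this bound is smaller than any \<open>R \<ge> d(z, o)\<close>. Hence every ball \<open>B(o, R)\<close> with
  \<open>R > r\<close> is mapped into itself, and a state \<open>x\<close> with \<open>d(x, o) > r\<close> is never revisited, since
  the chain leaving it is trapped in the smaller ball \<open>B(o, d(x, o))\<close>.
  A ball contains only finitely many grid points, and a Markov chain on a finite closed set has a
  recurrent state: a state \<open>x\<close> with a minimal set of successors is reachable from each of them,
  so the probability of avoiding \<open>x\<close> decays geometrically.\<close>

section \<open>Norms on \<open>real^'n\<close>\<close>

lemma is_norm_nonneg: "is_norm nrm \<Longrightarrow> 0 \<le> nrm x"
  and is_norm_zero: "is_norm nrm \<Longrightarrow> nrm 0 = 0"
  and is_norm_scaleR: "is_norm nrm \<Longrightarrow> nrm (a *\<^sub>R x) = \<bar>a\<bar> * nrm x"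
  and is_norm_triangle: "is_norm nrm \<Longrightarrow> nrm (x + y) \<le> nrm x + nrm y"
  by (simp_all add: is_norm_def)

lemma is_norm_minus_commute: "is_norm nrm \<Longrightarrow> nrm (x - y) = nrm (y - x)"
  using is_norm_scaleR[of nrm "-1" "y - x"] by simp

lemma is_norm_triangle_diff: "is_norm nrm \<Longrightarrow> nrm (x - z) \<le> nrm (x - y) + nrm (y - z)"
  using is_norm_triangle[of nrm "x - y" "y - z"] by simp

lemma is_norm_sum:
  assumes "is_norm nrm"
  shows "nrm (sum f A) \<le> (\<Sum>i\<in>A. nrm (f i))"
proof (induction A rule: infinite_finite_induct)
  case (insert a A)
  then show ?case using is_norm_triangle[OF assms, of "f a" "sum f A"] by simp
qed (simp_all add: is_norm_zero[OF assms])

lemma is_norm_le_sum_components: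
  assumes "is_norm nrm"
  shows "nrm x \<le> (\<Sum>j\<in>UNIV. \<bar>x $ j\<bar> * nrm (axis j 1))"
proof -
  have "nrm x = nrm (\<Sum>j\<in>UNIV. (x $ j) *\<^sub>R axis j (1::real))"
    using basis_expansion[of x] by (simp add: scalar_mult_eq_scaleR)
  also have "\<dots> \<le> (\<Sum>j\<in>UNIV. nrm ((x $ j) *\<^sub>R axis j 1))"
    by (rule is_norm_sum[OF assms])
  also have "\<dots> = (\<Sum>j\<in>UNIV. \<bar>x $ j\<bar> * nrm (axis j 1))"
    by (simp add: is_norm_scaleR[OF assms])
  finally show ?thesis .
qed

lemma is_norm_le_norm:
  assumes "is_norm nrm"
  shows "nrm x \<le> (\<Sum>j\<in>UNIV. nrm (axis j 1)) * norm x"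
proof -
  have "nrm x \<le> (\<Sum>j\<in>UNIV. \<bar>x $ j\<bar> * nrm (axis j 1))"
    by (rule is_norm_le_sum_components[OF assms])
  also have "\<dots> \<le> (\<Sum>j\<in>UNIV. norm x * nrm (axis j 1))"
    by (intro sum_mono mult_right_mono component_le_norm_cart is_norm_nonneg[OF assms])
  also have "\<dots> = (\<Sum>j\<in>UNIV. nrm (axis j 1)) * norm x"
    by (simp add: sum_distrib_left mult.commute)
  finally show ?thesis .
qed

lemma is_norm_lipschitz:
  assumes "is_norm nrm"
  shows "(\<Sum>j\<in>UNIV. nrm (axis j 1))-lipschitz_on A nrm"
proof (rule lipschitz_onI)
  fix x y
  have "\<bar>nrm x - nrm y\<bar> \<le> nrm (x - y)"
    using is_norm_triangle_diff[OF assms, of x 0 y] is_norm_triangle_diff[OF assms, of y 0 x]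
      is_norm_minus_commute[OF assms, of x y] by simp
  also have "\<dots> \<le> (\<Sum>j\<in>UNIV. nrm (axis j 1)) * norm (x - y)"
    by (rule is_norm_le_norm[OF assms])
  finally show "dist (nrm x) (nrm y) \<le> (\<Sum>j\<in>UNIV. nrm (axis j 1)) * dist x y"
    by (simp add: dist_real_def dist_norm)
qed (simp add: sum_nonneg is_norm_nonneg[OF assms])

text \<open>The converse comparison comes from compactness: \<open>nrm\<close> attains a positive
  minimum on the Euclidean unit sphere.\<close>
lemma is_norm_ge_norm:
  fixes nrm :: "real^'n \<Rightarrow> real"
  assumes "is_norm nrm"
  obtains m where "0 < m" "\<And>x. m * norm x \<le> nrm x"
proof -
  have "sphere (0::real^'n) 1 \<noteq> {}"
    using norm_axis_1[of undefined] by (metis mem_sphere_0 empty_iff)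
  then obtain s where s: "s \<in> sphere 0 1" "\<And>u. u \<in> sphere 0 1 \<Longrightarrow> nrm s \<le> nrm u"
    using continuous_attains_inf[OF compact_sphere _
        lipschitz_on_continuous_on[OF is_norm_lipschitz[OF assms]]] by blast
  have "nrm s \<noteq> 0"
    using s(1) assms unfolding is_norm_def by fastforce
  then have "0 < nrm s"
    using is_norm_nonneg[OF assms, of s] by linarith
  moreover have "nrm s * norm x \<le> nrm x" for x
  proof (cases "x = 0")
    case False
    then have "nrm s \<le> nrm ((1 / norm x) *\<^sub>R x)" by (intro s(2)) simp
    then show ?thesis using False by (simp add: is_norm_scaleR[OF assms] field_simps)
  qed (simp add: is_norm_zero[OF assms])
  ultimately show ?thesis using that by blast
qed

lemma bounded_is_norm_ball:
  assumes "is_norm nrm"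
  shows "bounded {y. nrm (y - c) < \<rho>}"
proof -
  obtain m where m: "0 < m" "\<And>x. m * norm x \<le> nrm x" using is_norm_ge_norm[OF assms] by blast
  have "{y. nrm (y - c) < \<rho>} \<subseteq> cball c (\<rho> / m)"
  proof
    fix y assume "y \<in> {y. nrm (y - c) < \<rho>}"
    then have "m * norm (y - c) \<le> \<rho>" using m(2)[of "y - c"] by simp
    then show "y \<in> cball c (\<rho> / m)" using m(1) by (simp add: dist_norm norm_minus_commute field_simps)
  qed
  then show ?thesis using bounded_cball bounded_subset by blast
qed

section \<open>Rounding to the grid\<close>

definition nearest_index :: "real \<Rightarrow> real^'n \<Rightarrow> int^'n" where
  "nearest_index \<delta> x = (\<chi> j. \<lfloor>x $ j / \<delta> + 1/2\<rfloor>)"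

lemma mem_cube_iff:
  assumes "\<delta> > 0"
  shows "x \<in> cube \<delta> m \<longleftrightarrow> m = nearest_index \<delta> x"
proof -
  have "(of_int (m $ j) - 1/2) * \<delta> \<le> x $ j \<and> x $ j < (of_int (m $ j) + 1/2) * \<delta>
        \<longleftrightarrow> of_int (m $ j) \<le> x $ j / \<delta> + 1/2 \<and> x $ j / \<delta> + 1/2 < of_int (m $ j) + 1" for j
    using assms by (auto simp: field_simps)
  also have "\<dots> j \<longleftrightarrow> m $ j = \<lfloor>x $ j / \<delta> + 1/2\<rfloor>" for j
    by linarith
  finally show ?thesis
    unfolding cube_def nearest_index_def by (auto simp: vec_eq_iff)
qed

lemma roundoff_eq_grid_pt:
  assumes "\<delta> > 0"
  shows "roundoff \<delta> x = grid_pt \<delta> (nearest_index \<delta> x)"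
  unfolding roundoff_def using mem_cube_iff[OF assms] by (intro the_equality) auto

lemma roundoff_in_discretization: "\<delta> > 0 \<Longrightarrow> roundoff \<delta> x \<in> discretization \<delta>"
  by (simp add: roundoff_eq_grid_pt discretization_def)

lemma mem_cube_zero_iff: "v \<in> cube \<delta> 0 \<longleftrightarrow> (\<forall>j. - (\<delta> / 2) \<le> v $ j \<and> v $ j < \<delta> / 2)"
  by (simp add: cube_def)

lemma diff_roundoff_in_cube_zero:
  assumes "\<delta> > 0"
  shows "x - roundoff \<delta> x \<in> cube \<delta> 0"
proof -
  let ?m = "nearest_index \<delta> x"
  have "- (\<delta> / 2) \<le> x $ j - \<delta> * of_int (?m $ j) \<and> x $ j - \<delta> * of_int (?m $ j) < \<delta> / 2" for j
  proof -
    have "(of_int (?m $ j) - 1/2) * \<delta> \<le> x $ j \<and> x $ j < (of_int (?m $ j) + 1/2) * \<delta>"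
      using mem_cube_iff[OF assms, of x ?m] unfolding cube_def by blast
    then show ?thesis by (simp add: algebra_simps)
  qed
  then show ?thesis
    unfolding roundoff_eq_grid_pt[OF assms] mem_cube_zero_iff by (simp add: grid_pt_def)
qed

lemma scaleR_in_cube_zero:
  assumes "v \<in> cube \<delta> 0" "\<bar>t\<bar> < 1"
  shows "t *\<^sub>R v \<in> cube \<delta> 0"
proof -
  have "\<bar>(t *\<^sub>R v) $ j\<bar> < \<delta> / 2" for j
  proof -
    have "\<bar>v $ j\<bar> \<le> \<delta> / 2" "0 < \<delta>"
      using assms(1) by (auto simp: mem_cube_zero_iff abs_le_iff dest: spec[of _ j])
    show ?thesis
    proof (cases "v $ j = 0")
      case False
      then have "\<bar>t\<bar> * \<bar>v $ j\<bar> < \<bar>v $ j\<bar>" using assms(2) by simp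
      then show ?thesis using \<open>\<bar>v $ j\<bar> \<le> \<delta> / 2\<close> by (simp add: abs_mult)
    qed (use \<open>0 < \<delta>\<close> in simp)
  qed
  then show ?thesis
    unfolding mem_cube_zero_iff abs_less_iff by (smt (verit))
qed

lemma le_diam_d:
  assumes bound: "\<And>x y. x \<in> A \<Longrightarrow> y \<in> A \<Longrightarrow> nrm (x - y) \<le> B"
    and "x \<in> A" "y \<in> A"
  shows "nrm (x - y) \<le> diam_d nrm A"
proof -
  have bdd: "bdd_above ((\<lambda>b. nrm (a - b)) ` A)" if "a \<in> A" for a
    using bound that by (auto intro!: bdd_aboveI)
  have "(SUP b\<in>A. nrm (a - b)) \<le> B" if "a \<in> A" for a
    using bound \<open>y \<in> A\<close> that by (intro cSUP_least) auto
  then have bdd': "bdd_above ((\<lambda>a. SUP b\<in>A. nrm (a - b)) ` A)"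
    by (auto intro!: bdd_aboveI)
  have "nrm (x - y) \<le> (SUP b\<in>A. nrm (x - b))"
    by (rule cSUP_upper[OF \<open>y \<in> A\<close> bdd[OF \<open>x \<in> A\<close>]])
  also have "\<dots> \<le> diam_d nrm A"
    unfolding diam_d_def by (rule cSUP_upper[OF \<open>x \<in> A\<close> bdd'])
  finally show ?thesis .
qed

lemma is_norm_diff_le_in_cube_zero:
  assumes "is_norm nrm" "x \<in> cube \<delta> 0" "y \<in> cube \<delta> 0"
  shows "nrm (x - y) \<le> \<delta> * (\<Sum>j\<in>UNIV. nrm (axis j 1))"
proof -
  have "nrm (x - y) \<le> (\<Sum>j\<in>UNIV. \<bar>(x - y) $ j\<bar> * nrm (axis j 1))"
    by (rule is_norm_le_sum_components[OF assms(1)])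
  also have "\<dots> \<le> (\<Sum>j\<in>UNIV. \<delta> * nrm (axis j 1))"
  proof (intro sum_mono mult_right_mono is_norm_nonneg[OF assms(1)])
    fix j
    have "- (\<delta> / 2) \<le> x $ j" "x $ j < \<delta> / 2" "- (\<delta> / 2) \<le> y $ j" "y $ j < \<delta> / 2"
      using assms(2,3) unfolding mem_cube_zero_iff by auto
    then show "\<bar>(x - y) $ j\<bar> \<le> \<delta>"
      unfolding vector_minus_component abs_le_iff by linarith
  qed
  finally show ?thesis by (simp add: sum_distrib_left)
qed

lemma roundoff_error_le_theta:
  assumes "is_norm nrm" "\<delta> > 0"
  shows "nrm (x - roundoff \<delta> x) \<le> theta nrm \<delta>"
proof -
  define v where "v = x - roundoff \<delta> x"
  have v: "v \<in> cube \<delta> 0"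
    unfolding v_def by (rule diff_roundoff_in_cube_zero[OF assms(2)])
  text \<open>\<open>-v\<close> need not lie in the half-open cube, so it is approached by \<open>-s v\<close> with \<open>s < 1\<close>.\<close>
  have diam: "(1 + s) * nrm v \<le> diam_d nrm (cube \<delta> 0)" if "0 \<le> s" "s < 1" for s
  proof -
    have "nrm (v - (- s) *\<^sub>R v) \<le> diam_d nrm (cube \<delta> 0)"
      using that
      by (intro le_diam_d[where nrm = nrm and A = "cube \<delta> 0",
            OF is_norm_diff_le_in_cube_zero[OF assms(1)] v] scaleR_in_cube_zero[OF v]) auto
    moreover have "v - (- s) *\<^sub>R v = (1 + s) *\<^sub>R v"
      by (simp add: algebra_simps)
    ultimately show ?thesis
      using that by (simp add: is_norm_scaleR[OF assms(1)])
  qed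
  have "2 * nrm v \<le> diam_d nrm (cube \<delta> 0)"
  proof (cases "nrm v = 0")
    case True
    then show ?thesis using diam[of 0] by simp
  next
    case False
    then have "nrm v < 2 * nrm v"
      using is_norm_nonneg[OF assms(1), of v] by simp
    then show ?thesis
    proof (rule dense_le_bounded)
      fix u assume "nrm v < u" "u < 2 * nrm v"
      then show "u \<le> diam_d nrm (cube \<delta> 0)"
        using diam[of "u / nrm v - 1"] False by (simp add: field_simps)
    qed
  qed
  then show ?thesis
    unfolding theta_def v_def by simp
qed

lemma theta_nonneg: "is_norm nrm \<Longrightarrow> \<delta> > 0 \<Longrightarrow> 0 \<le> theta nrm \<delta>"
  using roundoff_error_le_theta is_norm_nonneg order_trans by blast

lemma uniform_discrete_discretization:
  assumes "\<delta> > 0"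
  shows "uniform_discrete (discretization \<delta>)"
  unfolding uniform_discrete_def
proof (intro exI[of _ \<delta>] conjI ballI impI)
  fix x y assume "x \<in> discretization \<delta>" "y \<in> discretization \<delta>" "dist x y < \<delta>"
  then obtain k l where kl: "x = grid_pt \<delta> k" "y = grid_pt \<delta> l"
    unfolding discretization_def by auto
  have "k $ j = l $ j" for j
  proof -
    have "(x - y) $ j = \<delta> * of_int (k $ j - l $ j)"
      by (simp add: kl grid_pt_def algebra_simps)
    then have "\<delta> * \<bar>of_int (k $ j - l $ j)\<bar> = \<bar>(x - y) $ j\<bar>"
      using assms by (simp add: abs_mult)
    also have "\<dots> < \<delta>"
      using component_le_norm_cart[of "x - y" j] \<open>dist x y < \<delta>\<close> by (simp add: dist_norm)
    finally have "\<bar>k $ j - l $ j\<bar> < 1"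
      using assms by simp
    then show ?thesis by simp
  qed
  then show "x = y"
    by (simp add: kl grid_pt_def vec_eq_iff)
qed (fact assms)

lemma finite_Int_discretization:
  assumes "bounded A" "\<delta> > 0"
  shows "finite (A \<inter> discretization \<delta>)"
  using assms uniform_discrete_discretization uniform_discrete_finite_iff
  by (meson bounded_subset inf.cobounded1 inf.cobounded2 uniform_discrete_subset)

section \<open>The Markov chain of a DIFS\<close>

lemma is_DIFS_closed: "is_DIFS D W p N \<Longrightarrow> i \<in> {1..N} \<Longrightarrow> x \<in> D \<Longrightarrow> W i x \<in> D"
  and is_DIFS_prob_pos: "is_DIFS D W p N \<Longrightarrow> i \<in> {1..N} \<Longrightarrow> x \<in> D \<Longrightarrow> 0 < p i x"
  and is_DIFS_prob_sum: "is_DIFS D W p N \<Longrightarrow> x \<in> D \<Longrightarrow> (\<Sum>i=1..N. p i x) = 1"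
  by (simp_all add: is_DIFS_def)

lemma is_DIFS_maps_nonempty: "is_DIFS D W p N \<Longrightarrow> x \<in> D \<Longrightarrow> 1 \<le> N"
  using is_DIFS_prob_sum by (cases N) fastforce+

lemma hit_within_bounds:
  assumes "is_DIFS D W p N" "z \<in> D"
  shows "0 \<le> hit_within N W p k y z \<and> hit_within N W p k y z \<le> 1"
  using assms(2)
proof (induction k arbitrary: z)
  case (Suc k)
  let ?f = "\<lambda>i. p i z * (if W i z = y then 1 else hit_within N W p k y (W i z))"
  have "0 \<le> ?f i \<and> ?f i \<le> p i z" if "i \<in> {1..N}" for i
    using Suc.IH[OF is_DIFS_closed[OF assms(1) that Suc.prems]]
      is_DIFS_prob_pos[OF assms(1) that Suc.prems]
    by (simp add: mult_le_cancel_left1)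
  then have "0 \<le> sum ?f {1..N} \<and> sum ?f {1..N} \<le> (\<Sum>i=1..N. p i z)"
    by (auto intro: sum_nonneg sum_mono)
  then show ?case
    using is_DIFS_prob_sum[OF assms(1) Suc.prems] by simp
qed simp

lemma hit_within_Suc_mono:
  assumes "is_DIFS D W p N" "z \<in> D"
  shows "hit_within N W p k y z \<le> hit_within N W p (Suc k) y z"
  using assms(2)
proof (induction k arbitrary: z)
  case 0
  then show ?case using hit_within_bounds[OF assms(1) 0, of "Suc 0" y] by simp
next
  case (Suc k)
  have "p i z * (if W i z = y then 1 else hit_within N W p k y (W i z))
      \<le> p i z * (if W i z = y then 1 else hit_within N W p (Suc k) y (W i z))" if "i \<in> {1..N}" for i
    using Suc.IH[OF is_DIFS_closed[OF assms(1) that Suc.prems]]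
      is_DIFS_prob_pos[OF assms(1) that Suc.prems]
    by simp
  then show ?case
    by (simp only: hit_within.simps(2)) (rule sum_mono, blast)
qed

lemma hit_within_mono:
  assumes "is_DIFS D W p N" "z \<in> D" "k \<le> k'"
  shows "hit_within N W p k y z \<le> hit_within N W p k' y z"
  using lift_Suc_mono_le[of "\<lambda>k. hit_within N W p k y z"] hit_within_Suc_mono[OF assms(1,2)] assms(3)
  by blast

lemma hit_within_Suc_ge:
  assumes "is_DIFS D W p N" "z \<in> D" "i \<in> {1..N}"
  shows "p i z * (if W i z = y then 1 else hit_within N W p k y (W i z)) \<le> hit_within N W p (Suc k) y z"
proof -
  have "0 \<le> p j z * (if W j z = y then 1 else hit_within N W p k y (W j z))" if "j \<in> {1..N}" for j
    using hit_within_bounds[OF assms(1) is_DIFS_closed[OF assms(1) that assms(2)]]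
      is_DIFS_prob_pos[OF assms(1) that assms(2)] by simp
  then show ?thesis
    unfolding hit_within.simps(2) by (intro member_le_sum[OF assms(3)]) auto
qed

lemma one_minus_hit_within_Suc:
  assumes "is_DIFS D W p N" "z \<in> D"
  shows "1 - hit_within N W p (Suc k) y z
     = (\<Sum>i=1..N. p i z * (if W i z = y then 0 else 1 - hit_within N W p k y (W i z)))"
proof -
  have "1 - hit_within N W p (Suc k) y z
      = (\<Sum>i=1..N. p i z) - (\<Sum>i=1..N. p i z * (if W i z = y then 1 else hit_within N W p k y (W i z)))"
    using is_DIFS_prob_sum[OF assms] by simp
  also have "\<dots> = (\<Sum>i=1..N. p i z * (if W i z = y then 0 else 1 - hit_within N W p k y (W i z)))"
    unfolding sum_subtractf[symmetric] by (intro sum.cong) (auto simp: right_diff_distrib)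
  finally show ?thesis .
qed

lemma hit_within_eq_0_if_invariant:
  assumes "\<forall>i\<in>{1..N}. W i ` T \<subseteq> T" "x \<notin> T" "z \<in> T"
  shows "hit_within N W p k x z = 0"
  using assms(3)
proof (induction k arbitrary: z)
  case (Suc k)
  have "W i z \<in> T" if "i \<in> {1..N}" for i
    using assms(1) that Suc.prems by blast
  then show ?case
    using assms(2) Suc.IH by (auto intro!: sum.neutral)
qed simp

lemma not_recurrent_if_escapes:
  assumes "\<forall>i\<in>{1..N}. W i ` T \<subseteq> T" "x \<notin> T" "\<forall>i\<in>{1..N}. W i x \<in> T"
  shows "\<not> recurrent N W p x"
proof -
  have "W i x \<in> T" if "i \<in> {1..N}" for i
    using assms(3) that by blast
  moreover have "W i x \<noteq> x" if "i \<in> {1..N}" for i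
    using calculation[OF that] assms(2) by auto
  ultimately have "hit_within N W p (Suc k) x x = 0" for k
    using hit_within_eq_0_if_invariant[OF assms(1,2)] by (auto intro!: sum.neutral)
  then have "hit_within N W p k x x = 0" for k
    by (cases k) auto
  then show ?thesis
    unfolding recurrent_def by simp
qed

text \<open>The strict sublevel set of \<open>f\<close> at \<open>f x\<close> traps the chain, which hence never returns to \<open>x\<close>.\<close>
lemma recurrent_le_level:
  fixes f :: "'a \<Rightarrow> real"
  assumes decrease: "\<And>i z R. i \<in> {1..N} \<Longrightarrow> r < R \<Longrightarrow> f z \<le> R \<Longrightarrow> f (W i z) < R"
    and "recurrent N W p x"
  shows "f x \<le> r"
proof (rule ccontr)
  assume "\<not> f x \<le> r"
  then have "f (W i z) < f x" if "i \<in> {1..N}" "f z \<le> f x" for i z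
    using decrease[OF that(1) _ that(2)] by (simp add: not_le)
  then have "\<not> recurrent N W p x"
    by (intro not_recurrent_if_escapes[where T = "{z. f z < f x}"]) auto
  then show False using assms(2) by contradiction
qed

lemma recurrentI:
  assumes difs: "is_DIFS D W p N" and "x \<in> D"
    and close: "\<And>e. 0 < e \<Longrightarrow> \<exists>k. 1 - e \<le> hit_within N W p k x x"
  shows "recurrent N W p x"
proof -
  have bdd: "bdd_above (range (\<lambda>k. hit_within N W p k x x))"
    using hit_within_bounds[OF difs \<open>x \<in> D\<close>] by (auto intro!: bdd_aboveI)
  have "(SUP k. hit_within N W p k x x) \<le> 1"
    using hit_within_bounds[OF difs \<open>x \<in> D\<close>] by (intro cSUP_least) auto
  moreover have "1 \<le> (SUP k. hit_within N W p k x x)"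
  proof (rule field_le_epsilon)
    fix e :: real assume "0 < e"
    then obtain k where "1 - e \<le> hit_within N W p k x x"
      using close by blast
    also have "\<dots> \<le> (SUP k. hit_within N W p k x x)"
      by (rule cSUP_upper[OF _ bdd]) simp
    finally show "1 \<le> (SUP k. hit_within N W p k x x) + e"
      by simp
  qed
  ultimately show ?thesis
    unfolding recurrent_def by simp
qed

lemma one_minus_hit_within_add_le:
  assumes difs: "is_DIFS D W p N" and "C \<subseteq> D" and closed: "\<forall>i\<in>{1..N}. W i ` C \<subseteq> C"
    and escape: "\<And>z. z \<in> C \<Longrightarrow> 1 - hit_within N W p K x z \<le> M" and "z \<in> C"
  shows "1 - hit_within N W p (a + K) x z \<le> (1 - hit_within N W p a x z) * M"
  using \<open>z \<in> C\<close>
proof (induction a arbitrary: z)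
  case 0
  then show ?case using escape by simp
next
  case (Suc a)
  have zD: "z \<in> D" using Suc.prems \<open>C \<subseteq> D\<close> by blast
  have "1 - hit_within N W p (Suc a + K) x z
      = (\<Sum>i=1..N. p i z * (if W i z = x then 0 else 1 - hit_within N W p (a + K) x (W i z)))"
    using one_minus_hit_within_Suc[OF difs zD] by simp
  also have "\<dots> \<le> (\<Sum>i=1..N. p i z * (if W i z = x then 0 else (1 - hit_within N W p a x (W i z)) * M))"
  proof (rule sum_mono)
    fix i assume i: "i \<in> {1..N}"
    then have "W i z \<in> C" using closed Suc.prems by blast
    then show "p i z * (if W i z = x then 0 else 1 - hit_within N W p (a + K) x (W i z))
        \<le> p i z * (if W i z = x then 0 else (1 - hit_within N W p a x (W i z)) * M)"
      using Suc.IH is_DIFS_prob_pos[OF difs i zD] by (intro mult_left_mono) auto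
  qed
  also have "\<dots> = (\<Sum>i=1..N. p i z * (if W i z = x then 0 else 1 - hit_within N W p a x (W i z))) * M"
    unfolding sum_distrib_right by (intro sum.cong) auto
  also have "\<dots> = (1 - hit_within N W p (Suc a) x z) * M"
    using one_minus_hit_within_Suc[OF difs zD] by simp
  finally show ?case .
qed

lemma one_minus_hit_within_mult_le:
  assumes difs: "is_DIFS D W p N" and "C \<subseteq> D" and closed: "\<forall>i\<in>{1..N}. W i ` C \<subseteq> C"
    and escape: "\<And>z. z \<in> C \<Longrightarrow> 1 - hit_within N W p K x z \<le> M" and "z \<in> C"
  shows "1 - hit_within N W p (m * K) x z \<le> M ^ m"
proof (induction m)
  case (Suc m)
  have "0 \<le> M"
    using escape[OF \<open>z \<in> C\<close>] hit_within_bounds[OF difs, of z K x] assms(2,5) by auto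
  have "1 - hit_within N W p (Suc m * K) x z \<le> (1 - hit_within N W p (m * K) x z) * M"
    using one_minus_hit_within_add_le[OF assms, of "m * K"] by (simp add: add.commute)
  also have "\<dots> \<le> M ^ m * M"
    using Suc.IH \<open>0 \<le> M\<close> by (rule mult_right_mono)
  finally show ?case
    by (simp add: mult.commute)
qed simp

text \<open>Finiteness gives a common \<open>K\<close> such that from every state of \<open>C\<close> the chain misses \<open>x\<close>
  within \<open>K\<close> steps with probability at most some \<open>M < 1\<close>; hence it misses \<open>x\<close> within
  \<open>m K\<close> steps with probability at most \<open>M ^ m\<close>.\<close>
lemma recurrent_if_reachable_in_closed:
  assumes difs: "is_DIFS D W p N" and "finite C" "C \<subseteq> D" "x \<in> C"
    and closed: "\<forall>i\<in>{1..N}. W i ` C \<subseteq> C"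
    and reach: "\<And>z. z \<in> C \<Longrightarrow> \<exists>k. 0 < hit_within N W p k x z"
  shows "recurrent N W p x"
proof -
  obtain kz where kz: "\<And>z. z \<in> C \<Longrightarrow> 0 < hit_within N W p (kz z) x z"
    using reach by metis
  define K where "K = Max (kz ` C)"
  have hit_K: "0 < hit_within N W p K x z" if "z \<in> C" for z
  proof -
    have "kz z \<le> K"
      unfolding K_def using \<open>finite C\<close> that by simp
    then show ?thesis
      using kz[OF that] hit_within_mono[OF difs, of z "kz z" K x] that \<open>C \<subseteq> D\<close> by force
  qed
  define M where "M = Max ((\<lambda>z. 1 - hit_within N W p K x z) ` C)"
  have escape: "1 - hit_within N W p K x z \<le> M" if "z \<in> C" for z
    unfolding M_def using \<open>finite C\<close> that by simp
  have "M < 1"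
    unfolding M_def using \<open>finite C\<close> \<open>x \<in> C\<close> hit_K by (subst Max_less_iff) auto
  show ?thesis
  proof (rule recurrentI[OF difs])
    fix e :: real assume "0 < e"
    then obtain m where "M ^ m < e"
      using real_arch_pow_inv \<open>M < 1\<close> by blast
    then show "\<exists>k. 1 - e \<le> hit_within N W p k x x"
      using one_minus_hit_within_mult_le[OF difs \<open>C \<subseteq> D\<close> closed escape \<open>x \<in> C\<close>, of m]
      by (intro exI[of _ "m * K"]) simp
  qed (use \<open>x \<in> C\<close> \<open>C \<subseteq> D\<close> in blast)
qed

lemma finite_closed_ex_essential:
  assumes "finite F" "a \<in> F" "E `` F \<subseteq> F"
  shows "\<exists>x\<in>F. \<forall>y. (x, y) \<in> E\<^sup>* \<longrightarrow> (y, x) \<in> E\<^sup>*"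
proof -
  have reach_F: "E\<^sup>* `` {z} \<subseteq> F" if "z \<in> F" for z
    using Image_closed_trancl[OF assms(3)] that by blast
  then have reach_fin: "finite (E\<^sup>* `` {z})" if "z \<in> F" for z
    using that \<open>finite F\<close> finite_subset by blast
  obtain x where "x \<in> F" and least: "\<And>z. z \<in> F \<Longrightarrow> card (E\<^sup>* `` {x}) \<le> card (E\<^sup>* `` {z})"
    using ex_has_least_nat[of "\<lambda>z. z \<in> F" a "\<lambda>z. card (E\<^sup>* `` {z})"] \<open>a \<in> F\<close> by blast
  have "(y, x) \<in> E\<^sup>*" if "(x, y) \<in> E\<^sup>*" for y
  proof (rule ccontr)
    assume "(y, x) \<notin> E\<^sup>*"
    then have "E\<^sup>* `` {y} \<subset> E\<^sup>* `` {x}"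
      using that by (auto intro: rtrancl_trans)
    then have "card (E\<^sup>* `` {y}) < card (E\<^sup>* `` {x})"
      by (rule psubset_card_mono[OF reach_fin[OF \<open>x \<in> F\<close>]])
    moreover have "y \<in> F"
      using reach_F[OF \<open>x \<in> F\<close>] that by blast
    ultimately show False
      using least by (meson not_le)
  qed
  then show ?thesis
    using \<open>x \<in> F\<close> by blast
qed

definition transitions :: "nat \<Rightarrow> (nat \<Rightarrow> 'a \<Rightarrow> 'a) \<Rightarrow> ('a \<times> 'a) set" where
  "transitions N W = {(z, W i z) | z i. i \<in> {1..N}}"

lemma hit_within_pos_if_trancl:
  assumes difs: "is_DIFS D W p N" and "(z, x) \<in> (transitions N W)\<^sup>+" "z \<in> D"
  shows "\<exists>k. 0 < hit_within N W p k x z"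
  using assms(2,3)
proof (induction rule: converse_trancl_induct)
  case (base z)
  then obtain i where i: "i \<in> {1..N}" "W i z = x"
    by (auto simp: transitions_def)
  then have "p i z \<le> hit_within N W p (Suc 0) x z"
    using hit_within_Suc_ge[OF difs base.prems i(1), of x 0] by simp
  then show ?case
    using is_DIFS_prob_pos[OF difs i(1) base.prems] by (intro exI[of _ "Suc 0"]) simp
next
  case (step z y)
  then obtain i where i: "i \<in> {1..N}" "y = W i z"
    by (auto simp: transitions_def)
  then obtain k where k: "0 < hit_within N W p k x y"
    using step.IH is_DIFS_closed[OF difs _ step.prems] by blast
  have "0 < p i z * (if W i z = x then 1 else hit_within N W p k x (W i z))"
    using is_DIFS_prob_pos[OF difs i(1) step.prems] k i(2) by simp
  also have "\<dots> \<le> hit_within N W p (Suc k) x z"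
    by (rule hit_within_Suc_ge[OF difs step.prems i(1)])
  finally show ?case ..
qed

lemma ex_recurrent_in_finite_closed:
  assumes difs: "is_DIFS D W p N" and "finite F" "F \<subseteq> D" "F \<noteq> {}"
    and closed: "\<forall>i\<in>{1..N}. W i ` F \<subseteq> F"
  shows "\<exists>x\<in>F. recurrent N W p x"
proof -
  let ?E = "transitions N W"
  have edge: "(z, W i z) \<in> ?E" if "i \<in> {1..N}" for z i
    using that unfolding transitions_def by blast
  have E_closed: "?E `` A \<subseteq> A" if "\<forall>i\<in>{1..N}. W i ` A \<subseteq> A" for A
    unfolding transitions_def using that by blast
  obtain x where "x \<in> F" and essential: "\<And>y. (x, y) \<in> ?E\<^sup>* \<Longrightarrow> (y, x) \<in> ?E\<^sup>*"
    using finite_closed_ex_essential[OF \<open>finite F\<close> _ E_closed[OF closed]] \<open>F \<noteq> {}\<close> by blast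
  define C where "C = ?E\<^sup>* `` {x}"
  have "C \<subseteq> F"
    unfolding C_def using Image_closed_trancl[OF E_closed[OF closed]] \<open>x \<in> F\<close> by blast
  have C_closed: "\<forall>i\<in>{1..N}. W i ` C \<subseteq> C"
    unfolding C_def using edge by (blast intro: rtrancl_into_rtrancl)
  have "1 \<in> {1..N}"
    using is_DIFS_maps_nonempty[OF difs] \<open>x \<in> F\<close> \<open>F \<subseteq> D\<close> by auto
  have return: "(z, x) \<in> ?E\<^sup>+" if "z \<in> C" for z
  proof (rule rtrancl_into_trancl2)
    show "(z, W 1 z) \<in> ?E"
      using edge \<open>1 \<in> {1..N}\<close> .
    show "(W 1 z, x) \<in> ?E\<^sup>*"
      using C_closed \<open>1 \<in> {1..N}\<close> that essential unfolding C_def by blast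
  qed
  have "finite C" "C \<subseteq> D" "x \<in> C"
    using \<open>C \<subseteq> F\<close> \<open>F \<subseteq> D\<close> \<open>finite F\<close> finite_subset unfolding C_def by blast+
  then have "recurrent N W p x"
    using return by (intro recurrent_if_reachable_in_closed[OF difs _ _ _ C_closed]
        hit_within_pos_if_trancl[OF difs]) auto
  then show ?thesis
    using \<open>x \<in> F\<close> by blast
qed

section \<open>The absorbing ball\<close>

lemma roundoff_contraction_dist:
  assumes "is_norm nrm" "\<delta> > 0" "0 \<le> l"
    and contr: "\<And>x y. nrm (w x - w y) \<le> l * nrm (x - y)" and fixed: "w xf = xf"
  shows "nrm (roundoff \<delta> (w z) - c) \<le> theta nrm \<delta> + l * nrm (z - c) + (1 + l) * nrm (xf - c)"
proof -
  have "nrm (z - xf) \<le> nrm (z - c) + nrm (xf - c)"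
    using is_norm_triangle_diff[OF assms(1), of z xf c] is_norm_minus_commute[OF assms(1), of c xf]
    by simp
  then have "nrm (w z - xf) \<le> l * (nrm (z - c) + nrm (xf - c))"
    using contr[of z xf] fixed \<open>0 \<le> l\<close> by (metis mult_left_mono order_trans)
  moreover have "nrm (roundoff \<delta> (w z) - w z) \<le> theta nrm \<delta>"
    using roundoff_error_le_theta[OF assms(1,2)] is_norm_minus_commute[OF assms(1)] by metis
  moreover have "nrm (roundoff \<delta> (w z) - c)
      \<le> nrm (roundoff \<delta> (w z) - w z) + nrm (w z - xf) + nrm (xf - c)"
    using is_norm_triangle_diff[OF assms(1), of "roundoff \<delta> (w z)" c "w z"]
      is_norm_triangle_diff[OF assms(1), of "w z" c xf] by linarith
  ultimately show ?thesis
    by (simp add: algebra_simps)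
qed

lemma contraction_radius_ineq:
  fixes l L a \<rho> t r R s :: real
  assumes "0 \<le> l" "l \<le> L" "L < 1" "0 \<le> a" "a \<le> \<rho>" "0 \<le> t"
    and r: "r = (1 + L) / (1 - L) * \<rho> + t / (1 - L)" and "r < R" "s \<le> R"
  shows "t + l * s + (1 + l) * a < R"
proof -
  have "0 \<le> r"
    using assms by simp
  have "l * s \<le> l * R" "(1 + l) * a \<le> (1 + L) * \<rho>"
    using assms by (auto intro: mult_left_mono mult_mono)
  then have "t + l * s + (1 + l) * a \<le> l * R + ((1 + L) * \<rho> + t)"
    by linarith
  also have "\<dots> = l * R + (1 - L) * r"
    using \<open>L < 1\<close> unfolding r distrib_left by simp
  also have "\<dots> \<le> l * R + (1 - l) * r"
    using \<open>0 \<le> r\<close> \<open>l \<le> L\<close> by (simp add: mult_right_mono)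
  also have "\<dots> < l * R + (1 - l) * R"
    using \<open>r < R\<close> \<open>l \<le> L\<close> \<open>L < 1\<close> by simp
  also have "\<dots> = R"
    by (simp add: algebra_simps)
  finally show ?thesis .
qed

lemma roundoff_IFS_dist_lt:
  fixes nrm :: "real^'n \<Rightarrow> real" and w :: "nat \<Rightarrow> real^'n \<Rightarrow> real^'n"
  assumes "\<delta> > 0" "is_norm nrm"
    and lam: "\<forall>i\<in>{1..N}. 0 \<le> lam i \<and> lam i < 1"
    and contr: "\<forall>i\<in>{1..N}. \<forall>x y. nrm (w i x - w i y) \<le> lam i * nrm (x - y)"
    and fixed: "\<forall>i\<in>{1..N}. w i (xf i) = xf i"
    and r: "r = ((1 + Max (lam ` {1..N})) / (1 - Max (lam ` {1..N}))) * Max ((\<lambda>i. nrm (xf i - c)) ` {1..N})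
               + theta nrm \<delta> / (1 - Max (lam ` {1..N}))"
    and i: "i \<in> {1..N}" and "r < R" "nrm (z - c) \<le> R"
  shows "nrm (roundoff \<delta> (w i z) - c) < R"
proof -
  have "nrm (roundoff \<delta> (w i z) - c) \<le> theta nrm \<delta> + lam i * nrm (z - c) + (1 + lam i) * nrm (xf i - c)"
    using lam contr fixed i by (intro roundoff_contraction_dist[OF assms(2,1)]) auto
  also have "\<dots> < R"
  proof (rule contraction_radius_ineq[OF _ _ _ _ _ _ r \<open>r < R\<close> \<open>nrm (z - c) \<le> R\<close>])
    show "lam i \<le> Max (lam ` {1..N})" "nrm (xf i - c) \<le> Max ((\<lambda>i. nrm (xf i - c)) ` {1..N})"
      using i by auto
    show "Max (lam ` {1..N}) < 1"
      using lam i by (subst Max_less_iff) auto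
  qed (use lam i is_norm_nonneg[OF assms(2)] theta_nonneg[OF assms(2,1)] in auto)
  finally show ?thesis .
qed

theorem theorem13:
  fixes nrm :: "real^'n \<Rightarrow> real" and \<delta> :: real and N :: nat
    and w :: "nat \<Rightarrow> real^'n \<Rightarrow> real^'n" and p :: "nat \<Rightarrow> real^'n \<Rightarrow> real"
    and lam :: "nat \<Rightarrow> real" and xf :: "nat \<Rightarrow> real^'n" and c :: "real^'n"
  assumes "\<delta> > 0" and "is_norm nrm"
    and "is_DIFS (discretization \<delta>) (\<lambda>i x. roundoff \<delta> (w i x)) p N"
    and "\<forall>i\<in>{1..N}. 0 \<le> lam i \<and> lam i < 1"
    and "\<forall>i\<in>{1..N}. \<forall>x y. nrm (w i x - w i y) \<le> lam i * nrm (x - y)"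
    and "\<forall>i\<in>{1..N}. w i (xf i) = xf i"
  defines "r \<equiv> ((1 + Max (lam ` {1..N})) / (1 - Max (lam ` {1..N}))) * Max ((\<lambda>i. nrm (xf i - c)) ` {1..N})
               + theta nrm \<delta> / (1 - Max (lam ` {1..N}))"
  shows "(\<forall>\<epsilon>>0. let S = {y. nrm (y - c) < r + \<epsilon>} \<inter> discretization \<delta> in
            (\<forall>i\<in>{1..N}. (\<lambda>x. roundoff \<delta> (w i x)) ` S \<subseteq> S)
          \<and> {x\<in>discretization \<delta>. recurrent N (\<lambda>i x. roundoff \<delta> (w i x)) p x} \<subseteq> S)
       \<and> {x\<in>discretization \<delta>. recurrent N (\<lambda>i x. roundoff \<delta> (w i x)) p x} \<noteq> {}"
proof -
  let ?W = "\<lambda>i x. roundoff \<delta> (w i x)" and ?B = "\<lambda>R. {y. nrm (y - c) < R} \<inter> discretization \<delta>"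
  have into: "nrm (?W i z - c) < R" if "i \<in> {1..N}" "r < R" "nrm (z - c) \<le> R" for i z R
    using roundoff_IFS_dist_lt[OF assms(1,2,4,5,6) r_def[THEN meta_eq_to_obj_eq] that] .
  have closed: "\<forall>i\<in>{1..N}. ?W i ` ?B R \<subseteq> ?B R" if "r < R" for R
    using into[OF _ that] roundoff_in_discretization[OF assms(1)] by fastforce
  have recurrent_le: "nrm (x - c) \<le> r" if "recurrent N ?W p x" for x
    using recurrent_le_level[where f = "\<lambda>y. nrm (y - c)", OF into that] .
  define R where "R = max r (theta nrm \<delta>) + 1"
  have "roundoff \<delta> c \<in> ?B R"
    using roundoff_error_le_theta[OF assms(2,1), of c] is_norm_minus_commute[OF assms(2)]
      roundoff_in_discretization[OF assms(1)] unfolding R_def by fastforce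
  then have "\<exists>x\<in>?B R. recurrent N ?W p x"
    using closed finite_Int_discretization[OF bounded_is_norm_ball[OF assms(2)] assms(1)]
    by (intro ex_recurrent_in_finite_closed[OF assms(3)]) (auto simp: R_def)
  then have "{x\<in>discretization \<delta>. recurrent N ?W p x} \<noteq> {}"
    by blast
  moreover have "(\<forall>i\<in>{1..N}. ?W i ` ?B (r + \<epsilon>) \<subseteq> ?B (r + \<epsilon>))
      \<and> {x\<in>discretization \<delta>. recurrent N ?W p x} \<subseteq> ?B (r + \<epsilon>)" if "0 < \<epsilon>" for \<epsilon>
    using closed[of "r + \<epsilon>"] recurrent_le that by fastforce
  ultimately show ?thesis
    unfolding Let_def by blast
qed

end
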